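(* Let $(\Gamma,d)$, $\rho$, $S_m$, $O(g)$, $\Delta$ be as in the context. Let $n\in\mathbb{N}$, $r>n+\Delta$, and enumerate $S_r=\{g_1,\dots,g_{\#S_r}\}$, writing $O_j=O(g_j)$. Then for every $i$ and every $h\in S_n$, \[\sum_{j=1}^{\#S_r}\rho(O_i\cap hO_j)\le e^{-\delta_\Gamma r+\log n+O(1)},\] with $O(1)$ bounded independently of $n,r,i,h$.
   Context: $\Gamma$ is a finitely generated group acting properly cocompactly by isometries on a proper quasiruled hyperbolic space $(X,d)$ with basepoint $x_0$, $d(g,h)=d(g.x_0,h.x_0)$; $(\Gamma,d)$ is a proper quasiruled hyperbolic space with visual boundary $\partial\Gamma$. $B_m=\{g:d(g,e)\le m\}$, $\delta_\Gamma=\limsup_m\frac1m\log\#B_m$, $S_m=B_m\setminus B_{m-k}$ for a fixed $k$. $O(g)$ is the set of $\xi\in\partial\Gamma$ such that some quasiruler ray from $e$ to $\xi$ meets the closed $C$-ball about $g$, for a fixed constant $C$ large enough that $\rho(O(g))=e^{-\delta_\Gamma d(g,e)+O(1)}$ for all $g$ and that shadows of elements of each shell cover $\partial\Gamma$ with uniformly bounded multiplicity. $\rho=\rho_e$ is the Patterson–Sullivan measure (of dimension $\delta_\Gamma$, $\Gamma$-quasiconformal). $\Delta$ is the maximal thickness of quasitriangles in $\Gamma$. *)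

theory Defs
  imports "HOL-Analysis.Analysis" "HOL-Algebra.Generated_Groups"
begin

definition gromov_prod :: "('a \<Rightarrow> 'a \<Rightarrow> real) \<Rightarrow> 'a \<Rightarrow> 'a \<Rightarrow> 'a \<Rightarrow> real" where
  "gromov_prod d x y w = (d x w + d y w - d x y) / 2"

definition gromov_hyperbolic :: "'a set \<Rightarrow> ('a \<Rightarrow> 'a \<Rightarrow> real) \<Rightarrow> bool" where
  "gromov_hyperbolic P d \<longleftrightarrow> (\<exists>\<delta>. \<forall>x\<in>P. \<forall>y\<in>P. \<forall>z\<in>P. \<forall>w\<in>P.
     gromov_prod d x z w \<ge> min (gromov_prod d x y w) (gromov_prod d y z w) - \<delta>)"

definition quasiruler :: "'a set \<Rightarrow> ('a \<Rightarrow> 'a \<Rightarrow> real) \<Rightarrow> real \<Rightarrow> real \<Rightarrow> real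
    \<Rightarrow> real set \<Rightarrow> (real \<Rightarrow> 'a) \<Rightarrow> bool" where
  "quasiruler P d lam c tau I \<gamma> \<longleftrightarrow> \<gamma> ` I \<subseteq> P \<and>
     (\<forall>s\<in>I. \<forall>t\<in>I. \<bar>s - t\<bar> / lam - c \<le> d (\<gamma> s) (\<gamma> t) \<and> d (\<gamma> s) (\<gamma> t) \<le> lam * \<bar>s - t\<bar> + c) \<and>
     (\<forall>s\<in>I. \<forall>t\<in>I. \<forall>u\<in>I. s \<le> t \<and> t \<le> u \<longrightarrow> gromov_prod d (\<gamma> s) (\<gamma> u) (\<gamma> t) \<le> tau)"

definition quasiruled_with :: "'a set \<Rightarrow> ('a \<Rightarrow> 'a \<Rightarrow> real) \<Rightarrow> real \<Rightarrow> real \<Rightarrow> real \<Rightarrow> bool" where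
  "quasiruled_with P d lam c tau \<longleftrightarrow> lam \<ge> 1 \<and> c \<ge> 0 \<and> tau \<ge> 0 \<and>
     (\<forall>x\<in>P. \<forall>y\<in>P. \<exists>a b \<gamma>. a \<le> b \<and> \<gamma> a = x \<and> \<gamma> b = y \<and> quasiruler P d lam c tau {a..b} \<gamma>)"

definition quasiruled :: "'a set \<Rightarrow> ('a \<Rightarrow> 'a \<Rightarrow> real) \<Rightarrow> bool" where
  "quasiruled P d \<longleftrightarrow> (\<exists>lam c tau. quasiruled_with P d lam c tau)"

definition quasitriangles_thin :: "'a set \<Rightarrow> ('a \<Rightarrow> 'a \<Rightarrow> real) \<Rightarrow> real \<Rightarrow> real \<Rightarrow> real \<Rightarrow> real \<Rightarrow> bool" where
  "quasitriangles_thin P d lam c tau \<Delta> \<longleftrightarrow>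
    (\<forall>a1 b1 \<gamma>1 a2 b2 \<gamma>2 a3 b3 \<gamma>3.
       a1 \<le> b1 \<and> a2 \<le> b2 \<and> a3 \<le> b3 \<and>
       quasiruler P d lam c tau {a1..b1} \<gamma>1 \<and> quasiruler P d lam c tau {a2..b2} \<gamma>2 \<and>
       quasiruler P d lam c tau {a3..b3} \<gamma>3 \<and>
       \<gamma>1 b1 = \<gamma>2 a2 \<and> \<gamma>2 b2 = \<gamma>3 a3 \<and> \<gamma>3 b3 = \<gamma>1 a1 \<longrightarrow>
       (\<forall>p\<in>\<gamma>1 ` {a1..b1}. \<exists>q\<in>\<gamma>2 ` {a2..b2} \<union> \<gamma>3 ` {a3..b3}. d p q \<le> \<Delta>))"

definition conv_infty :: "'a set \<Rightarrow> ('a \<Rightarrow> 'a \<Rightarrow> real) \<Rightarrow> 'a \<Rightarrow> (nat \<Rightarrow> 'a) \<Rightarrow> bool" where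
  "conv_infty P d e u \<longleftrightarrow> range u \<subseteq> P \<and>
     Liminf (sequentially \<times>\<^sub>F sequentially) (\<lambda>(m, n). ereal (gromov_prod d (u m) (u n) e)) = \<infinity>"

definition seq_equiv :: "('a \<Rightarrow> 'a \<Rightarrow> real) \<Rightarrow> 'a \<Rightarrow> (nat \<Rightarrow> 'a) \<Rightarrow> (nat \<Rightarrow> 'a) \<Rightarrow> bool" where
  "seq_equiv d e u v \<longleftrightarrow>
     Liminf (sequentially \<times>\<^sub>F sequentially) (\<lambda>(m, n). ereal (gromov_prod d (u m) (v n) e)) = \<infinity>"

definition bclass :: "'a set \<Rightarrow> ('a \<Rightarrow> 'a \<Rightarrow> real) \<Rightarrow> 'a \<Rightarrow> (nat \<Rightarrow> 'a) \<Rightarrow> (nat \<Rightarrow> 'a) set" where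
  "bclass P d e u = {v. conv_infty P d e v \<and> seq_equiv d e u v}"

definition gboundary :: "'a set \<Rightarrow> ('a \<Rightarrow> 'a \<Rightarrow> real) \<Rightarrow> 'a \<Rightarrow> (nat \<Rightarrow> 'a) set set" where
  "gboundary P d e = bclass P d e ` {u. conv_infty P d e u}"

definition bgromov_prod :: "('a \<Rightarrow> 'a \<Rightarrow> real) \<Rightarrow> 'a \<Rightarrow> (nat \<Rightarrow> 'a) set \<Rightarrow> (nat \<Rightarrow> 'a) set \<Rightarrow> ereal" where
  "bgromov_prod d e \<xi> \<eta> = (SUP u\<in>\<xi>. SUP v\<in>\<eta>.
     Liminf (sequentially \<times>\<^sub>F sequentially) (\<lambda>(m, n). ereal (gromov_prod d (u m) (v n) e)))"

definition bnbhd :: "'a set \<Rightarrow> ('a \<Rightarrow> 'a \<Rightarrow> real) \<Rightarrow> 'a \<Rightarrow> (nat \<Rightarrow> 'a) set \<Rightarrow> real \<Rightarrow> (nat \<Rightarrow> 'a) set set" where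
  "bnbhd P d e \<xi> R = {\<eta> \<in> gboundary P d e. bgromov_prod d e \<xi> \<eta> > ereal R}"

text \<open>Borel sigma-algebra of the visual topology, generated by the standard neighbourhoods.\<close>
definition boundary_sets :: "'a set \<Rightarrow> ('a \<Rightarrow> 'a \<Rightarrow> real) \<Rightarrow> 'a \<Rightarrow> (nat \<Rightarrow> 'a) set set set" where
  "boundary_sets P d e = sigma_sets (gboundary P d e)
     {bnbhd P d e \<xi> R | \<xi> R. \<xi> \<in> gboundary P d e}"

definition busemann :: "('a \<Rightarrow> 'a \<Rightarrow> real) \<Rightarrow> (nat \<Rightarrow> 'a) set \<Rightarrow> 'a \<Rightarrow> 'a \<Rightarrow> real" where
  "busemann d \<xi> x y = real_of_ereal (SUP u\<in>\<xi>. limsup (\<lambda>n. ereal (d x (u n) - d y (u n))))"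

definition bact :: "('g, 'b) monoid_scheme \<Rightarrow> 'g \<Rightarrow> (nat \<Rightarrow> 'g) set \<Rightarrow> (nat \<Rightarrow> 'g) set" where
  "bact G h \<xi> = (\<lambda>u n. h \<otimes>\<^bsub>G\<^esub> u n) ` \<xi>"

definition gball :: "('g, 'b) monoid_scheme \<Rightarrow> ('g \<Rightarrow> 'g \<Rightarrow> real) \<Rightarrow> real \<Rightarrow> 'g set" where
  "gball G d m = {g \<in> carrier G. d g \<one>\<^bsub>G\<^esub> \<le> m}"

definition shell :: "('g, 'b) monoid_scheme \<Rightarrow> ('g \<Rightarrow> 'g \<Rightarrow> real) \<Rightarrow> real \<Rightarrow> real \<Rightarrow> 'g set" where
  "shell G d k m = gball G d m - gball G d (m - k)"

definition crit_exp :: "('g, 'b) monoid_scheme \<Rightarrow> ('g \<Rightarrow> 'g \<Rightarrow> real) \<Rightarrow> real" where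
  "crit_exp G d = real_of_ereal
     (limsup (\<lambda>m::nat. ereal (ln (real (card (gball G d (real m)))) / real m)))"

definition shadow :: "('g, 'b) monoid_scheme \<Rightarrow> ('g \<Rightarrow> 'g \<Rightarrow> real) \<Rightarrow> real \<Rightarrow> real \<Rightarrow> real
    \<Rightarrow> real \<Rightarrow> 'g \<Rightarrow> (nat \<Rightarrow> 'g) set set" where
  "shadow G d lam c tau C g = {\<xi> \<in> gboundary (carrier G) d \<one>\<^bsub>G\<^esub>. \<exists>\<gamma>.
      quasiruler (carrier G) d lam c tau {0..} \<gamma> \<and> \<gamma> 0 = \<one>\<^bsub>G\<^esub> \<and> (\<lambda>n. \<gamma> (real n)) \<in> \<xi> \<and>
      (\<exists>t\<ge>0. d (\<gamma> t) g \<le> C)}"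

text \<open>Gamma-quasiconformal measure of dimension delta on the boundary (Radon-Nikodym
  derivative of g_* rho with respect to rho comparable to exp(-delta * busemann(g, e))).\<close>
definition quasiconformal :: "('g, 'b) monoid_scheme \<Rightarrow> ('g \<Rightarrow> 'g \<Rightarrow> real) \<Rightarrow> real
    \<Rightarrow> (nat \<Rightarrow> 'g) set measure \<Rightarrow> bool" where
  "quasiconformal G d \<delta> \<rho> \<longleftrightarrow> (\<exists>Q>0. \<forall>g\<in>carrier G. \<forall>A\<in>sets \<rho>.
      bact G (inv\<^bsub>G\<^esub> g) ` A \<in> sets \<rho> \<and>
      emeasure \<rho> (bact G (inv\<^bsub>G\<^esub> g) ` A)
        \<le> ennreal Q * (\<integral>\<^sup>+\<xi>\<in>A. ennreal (exp (- \<delta> * busemann d \<xi> g \<one>\<^bsub>G\<^esub>)) \<partial>\<rho>) \<and>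
      ennreal (1 / Q) * (\<integral>\<^sup>+\<xi>\<in>A. ennreal (exp (- \<delta> * busemann d \<xi> g \<one>\<^bsub>G\<^esub>)) \<partial>\<rho>)
        \<le> emeasure \<rho> (bact G (inv\<^bsub>G\<^esub> g) ` A))"

definition isometric_action :: "('g, 'b) monoid_scheme \<Rightarrow> ('g \<Rightarrow> 'x::metric_space \<Rightarrow> 'x) \<Rightarrow> bool" where
  "isometric_action G \<phi> \<longleftrightarrow>
     (\<forall>x. \<phi> \<one>\<^bsub>G\<^esub> x = x) \<and>
     (\<forall>g\<in>carrier G. \<forall>h\<in>carrier G. \<forall>x. \<phi> (g \<otimes>\<^bsub>G\<^esub> h) x = \<phi> g (\<phi> h x)) \<and>
     (\<forall>g\<in>carrier G. \<forall>x y. dist (\<phi> g x) (\<phi> g y) = dist x y)"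

definition properly_acting :: "('g, 'b) monoid_scheme \<Rightarrow> ('g \<Rightarrow> 'x::metric_space \<Rightarrow> 'x) \<Rightarrow> bool" where
  "properly_acting G \<phi> \<longleftrightarrow>
     (\<forall>K. compact K \<longrightarrow> finite {g \<in> carrier G. \<phi> g ` K \<inter> K \<noteq> {}})"

definition cocompact_action :: "('g, 'b) monoid_scheme \<Rightarrow> ('g \<Rightarrow> 'x::metric_space \<Rightarrow> 'x) \<Rightarrow> bool" where
  "cocompact_action G \<phi> \<longleftrightarrow> (\<exists>K. compact K \<and> (\<Union>g\<in>carrier G. \<phi> g ` K) = UNIV)"

definition proper_space :: "'x::metric_space itself \<Rightarrow> bool" where
  "proper_space _ \<longleftrightarrow> (\<forall>x::'x. \<forall>r. compact (cball x r))"

definition finitely_generated :: "('g, 'b) monoid_scheme \<Rightarrow> bool" where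
  "finitely_generated G \<longleftrightarrow> (\<exists>S. finite S \<and> S \<subseteq> carrier G \<and> generate G S = carrier G)"

end

theory Submission
  imports Defs
begin

text \<open>Translating by \<open>h\<^sup>-\<^sup>1\<close> turns the family \<open>hO\<^sub>j\<close> back into the shadows \<open>O\<^sub>j\<close> of the shell \<open>S\<^sub>r\<close>,
  which cover \<open>\<partial>\<Gamma>\<close> with multiplicity at most some \<open>M\<close>. Hence every point of \<open>O\<^sub>i\<close> lies in at
  most \<open>M\<close> of the sets \<open>O\<^sub>i \<inter> hO\<^sub>j\<close>, and the sum is at most \<open>M \<rho>(O\<^sub>i) \<le> M e\<^bsup>-\<delta>\<^sub>\<Gamma> r + O(1)\<^esup>\<close>.\<close>

lemma sum_measure_Int_le_multiplicity:
  fixes M :: "'a measure"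
  assumes "finite_measure M" and fin: "finite F" and A: "A \<in> sets M"
    and mult: "\<And>\<xi>. \<xi> \<in> A \<Longrightarrow> card {g\<in>F. \<xi> \<in> B g} \<le> m"
  shows "(\<Sum>g\<in>F. measure M (A \<inter> B g)) \<le> real m * measure M A"
proof -
  interpret finite_measure M by fact
  define F' where "F' = {g\<in>F. A \<inter> B g \<in> sets M}"
  have fin': "finite F'" using fin unfolding F'_def by auto
  have int: "integrable M (indicator (A \<inter> B g) :: _ \<Rightarrow> real)" if "g \<in> F'" for g
    using that by (auto simp: F'_def less_top[symmetric] intro!: integrable_real_indicator)
  have pointwise: "(\<Sum>g\<in>F'. indicator (A \<inter> B g) \<xi> :: real) \<le> real m * indicator A \<xi>" for \<xi>
  proof (cases "\<xi> \<in> A")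
    case True
    have "(\<Sum>g\<in>F'. indicator (A \<inter> B g) \<xi> :: real) = real (card {g\<in>F'. \<xi> \<in> B g})"
      using True fin' by (simp add: indicator_def sum.If_cases Int_def conj_commute)
    also have "card {g\<in>F'. \<xi> \<in> B g} \<le> card {g\<in>F. \<xi> \<in> B g}"
      by (rule card_mono) (auto simp: fin F'_def)
    finally show ?thesis using mult[OF True] True by simp
  qed simp
  have "(\<Sum>g\<in>F. measure M (A \<inter> B g)) = (\<Sum>g\<in>F'. measure M (A \<inter> B g))"
    by (rule sum.mono_neutral_right) (auto simp: F'_def fin measure_notin_sets)
  also have "\<dots> = integral\<^sup>L M (\<lambda>\<xi>. \<Sum>g\<in>F'. indicator (A \<inter> B g) \<xi>)"
    using int by (simp add: Bochner_Integration.integral_sum F'_def)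
  also have "\<dots> \<le> integral\<^sup>L M (\<lambda>\<xi>. real m * indicator A \<xi>)"
    using A int pointwise
    by (intro integral_mono Bochner_Integration.integrable_sum)
       (auto simp: less_top[symmetric] intro!: integrable_real_indicator)
  also have "\<dots> = real m * measure M A" using A by simp
  finally show ?thesis .
qed

lemma gboundary_values_in_carrier:
  "\<eta> \<in> gboundary P d e \<Longrightarrow> u \<in> \<eta> \<Longrightarrow> u n \<in> P"
  unfolding gboundary_def bclass_def conv_infty_def by auto

lemma bact_inv_bact:
  assumes "group G" and h: "h \<in> carrier G" and vals: "\<And>u n. u \<in> \<eta> \<Longrightarrow> u n \<in> carrier G"
  shows "bact G (inv\<^bsub>G\<^esub> h) (bact G h \<eta>) = \<eta>"
proof -
  interpret group G by fact
  have "(\<lambda>n. inv\<^bsub>G\<^esub> h \<otimes>\<^bsub>G\<^esub> (h \<otimes>\<^bsub>G\<^esub> u n)) = u" if "u \<in> \<eta>" for u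
    using vals[OF that] h by (auto simp: m_assoc[symmetric])
  then show ?thesis
    unfolding bact_def image_image by simp
qed

lemma card_translated_cover_le:
  assumes "group G" and h: "h \<in> carrier G" and "finite F"
    and S_bdry: "\<And>g. S g \<subseteq> gboundary (carrier G) d e"
    and mult: "\<forall>\<eta>\<in>gboundary (carrier G) d e. card {g\<in>F. \<eta> \<in> S g} \<le> M"
  shows "card {g\<in>F. \<xi> \<in> bact G h ` S g} \<le> M"
proof (cases "{g\<in>F. \<xi> \<in> bact G h ` S g} = {}")
  case False
  define \<eta> where "\<eta> = bact G (inv\<^bsub>G\<^esub> h) \<xi>"
  have untranslate: "\<eta> \<in> S g" if translated: "\<xi> \<in> bact G h ` S g" for g
  proof -
    obtain \<zeta> where \<zeta>: "\<zeta> \<in> S g" "\<xi> = bact G h \<zeta>"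
      using translated by blast
    have "\<And>u n. u \<in> \<zeta> \<Longrightarrow> u n \<in> carrier G"
      using \<zeta>(1) S_bdry by (blast intro: gboundary_values_in_carrier)
    then show ?thesis
      using \<zeta> bact_inv_bact[OF \<open>group G\<close> h] unfolding \<eta>_def by simp
  qed
  then have "card {g\<in>F. \<xi> \<in> bact G h ` S g} \<le> card {g\<in>F. \<eta> \<in> S g}"
    using \<open>finite F\<close> by (intro card_mono) auto
  moreover have "\<eta> \<in> gboundary (carrier G) d e"
    using False untranslate S_bdry by blast
  ultimately show ?thesis using mult by fastforce
next
  case True
  then show ?thesis by (metis card.empty zero_le)
qed

lemma crit_exp_nonneg: "0 \<le> crit_exp G d"
proof -
  have ln_nonneg: "0 \<le> ln (real n)" for n :: nat
    by (cases "n = 0") auto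
  have "0 \<le> limsup (\<lambda>m::nat. ereal (ln (real (card (gball G d (real m)))) / real m))"
    by (rule le_Limsup) (auto intro!: always_eventually divide_nonneg_nonneg ln_nonneg)
  then show ?thesis unfolding crit_exp_def by (rule real_of_ereal_pos)
qed

lemma measure_shell_element_le:
  assumes "0 \<le> \<delta>" and g: "g \<in> shell G d k r"
    and upper: "measure M S \<le> exp (- \<delta> * d g \<one>\<^bsub>G\<^esub> + K)"
  shows "measure M S \<le> exp (- \<delta> * r + \<delta> * k + K)"
proof -
  have "r - k < d g \<one>\<^bsub>G\<^esub>" using g unfolding shell_def gball_def by auto
  then have "\<delta> * (r - k) \<le> \<delta> * d g \<one>\<^bsub>G\<^esub>" using \<open>0 \<le> \<delta>\<close> by (intro mult_left_mono) auto
  then have "exp (- \<delta> * d g \<one>\<^bsub>G\<^esub> + K) \<le> exp (- \<delta> * r + \<delta> * k + K)"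
    by (simp add: algebra_simps)
  with upper show ?thesis by linarith
qed

lemma sets_of_positive_measure: "0 < measure M A \<Longrightarrow> A \<in> sets M"
  using measure_notin_sets by fastforce

theorem mainTheorem12:
  fixes G (structure)
    and \<phi> :: "'g \<Rightarrow> 'x::metric_space \<Rightarrow> 'x"
    and x0 :: 'x
    and \<rho> :: "(nat \<Rightarrow> 'g) set measure"
    and lam c tau C k \<Delta> :: real
    and d :: "'g \<Rightarrow> 'g \<Rightarrow> real" and \<delta> :: real and Sh :: "'g \<Rightarrow> (nat \<Rightarrow> 'g) set set"
  defines "d \<equiv> (\<lambda>g h. dist (\<phi> g x0) (\<phi> h x0))"
    and "\<delta> \<equiv> crit_exp G d"
    and "Sh \<equiv> shadow G d lam c tau C"
  assumes grp: "group G" and fg: "finitely_generated G"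
    and act: "isometric_action G \<phi>" and prop_act: "properly_acting G \<phi>"
    and cocpt: "cocompact_action G \<phi>"
    and X_proper: "proper_space TYPE('x)"
    and X_hyp: "gromov_hyperbolic UNIV (dist :: 'x \<Rightarrow> 'x \<Rightarrow> real)"
    and X_qr: "quasiruled UNIV (dist :: 'x \<Rightarrow> 'x \<Rightarrow> real)"
    and Gamma_qr: "quasiruled_with (carrier G) d lam c tau"
    and thin: "quasitriangles_thin (carrier G) d lam c tau \<Delta>"
    and k_pos: "k > 0"
    and rho_space: "space \<rho> = gboundary (carrier G) d \<one>"
    and rho_sets: "sets \<rho> = boundary_sets (carrier G) d \<one>"
    and rho_fin: "finite_measure \<rho>"
    and rho_qc: "quasiconformal G d \<delta> \<rho>"
    and C_shadow: "\<exists>K. \<forall>g\<in>carrier G.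
         exp (- \<delta> * d g \<one> - K) \<le> measure \<rho> (Sh g) \<and> measure \<rho> (Sh g) \<le> exp (- \<delta> * d g \<one> + K)"
    and C_cover: "\<exists>M::nat. \<forall>m::nat.
         (\<Union>g\<in>shell G d k (real m). Sh g) = gboundary (carrier G) d \<one> \<and>
         (\<forall>\<xi>\<in>gboundary (carrier G) d \<one>. card {g \<in> shell G d k (real m). \<xi> \<in> Sh g} \<le> M)"
  shows "\<exists>K. \<forall>n::nat. \<forall>r::nat. \<forall>gi\<in>shell G d k (real r). \<forall>h\<in>shell G d k (real n).
           n \<ge> 1 \<longrightarrow> real r > real n + \<Delta> \<longrightarrow>
           (\<Sum>g\<in>shell G d k (real r). measure \<rho> (Sh gi \<inter> bact G h ` Sh g))
             \<le> exp (- \<delta> * real r + ln (real n) + K)"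
proof -
  obtain K where K: "\<forall>g\<in>carrier G. exp (- \<delta> * d g \<one> - K) \<le> measure \<rho> (Sh g)
                                    \<and> measure \<rho> (Sh g) \<le> exp (- \<delta> * d g \<one> + K)"
    using C_shadow by blast
  obtain M :: nat where M: "\<forall>m::nat. \<forall>\<xi>\<in>gboundary (carrier G) d \<one>.
                                card {g \<in> shell G d k (real m). \<xi> \<in> Sh g} \<le> M"
    using C_cover by blast
  have Sh_bdry: "\<And>g. Sh g \<subseteq> gboundary (carrier G) d \<one>"
    unfolding Sh_def shadow_def by auto
  show ?thesis
  proof (intro exI[of _ "ln (real M + 1) + \<delta> * k + K"] allI ballI impI)
    fix n r :: nat and gi h
    assume gi: "gi \<in> shell G d k (real r)" and h: "h \<in> shell G d k (real n)" and "n \<ge> 1"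
    have carrier: "gi \<in> carrier G" "h \<in> carrier G"
      using gi h unfolding shell_def gball_def by auto
    have measurable: "Sh gi \<in> sets \<rho>"
      using K carrier by (intro sets_of_positive_measure) (meson exp_gt_zero less_le_trans)
    have small: "measure \<rho> (Sh gi) \<le> exp (- \<delta> * r + \<delta> * k + K)"
      using K carrier gi crit_exp_nonneg by (intro measure_shell_element_le) (auto simp: \<delta>_def)
    show "(\<Sum>g\<in>shell G d k r. measure \<rho> (Sh gi \<inter> bact G h ` Sh g))
            \<le> exp (- \<delta> * r + ln (real n) + (ln (real M + 1) + \<delta> * k + K))"
    proof (cases "finite (shell G d k r)")
      case fin: True
      have "card {g\<in>shell G d k r. \<xi> \<in> bact G h ` Sh g} \<le> M" for \<xi>
        using M by (intro card_translated_cover_le[OF grp carrier(2) fin Sh_bdry]) auto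
      then have "(\<Sum>g\<in>shell G d k r. measure \<rho> (Sh gi \<inter> bact G h ` Sh g))
                  \<le> real M * measure \<rho> (Sh gi)"
        by (intro sum_measure_Int_le_multiplicity[OF rho_fin fin measurable])
      also have "\<dots> \<le> (real M + 1) * exp (- \<delta> * r + \<delta> * k + K)"
        using small by (intro mult_mono) auto
      also have "\<dots> = exp (ln (real M + 1) + (- \<delta> * r + \<delta> * k + K))"
        by (simp add: exp_add)
      also have "\<dots> \<le> exp (- \<delta> * r + ln (real n) + (ln (real M + 1) + \<delta> * k + K))"
        using \<open>n \<ge> 1\<close> by simp
      finally show ?thesis .
    qed simp
  qed
qed

end
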